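(* Let $p$ and $q$ be distinct positive integers. Then for every integer $n\ge p$, the number of compositions of $n-p$ all of whose parts are equal to $p$ or $q$ equals the number of compositions of $n$ all of whose parts are of the form $p+qi$ with $i\in\mathbb N=\{0,1,2,\dots\}$.
   Context: A composition of an integer $n\ge 0$ is a finite sequence $(a_1,\dots,a_k)$ of positive integers (the parts) with sum $n$; the empty sequence is the unique composition of $0$. *)

theory Defs
  imports Main
begin

definition compositions_with_parts :: "nat set \<Rightarrow> nat \<Rightarrow> nat list set" where
  "compositions_with_parts S n =
     {xs. (\<forall>x\<in>set xs. 0 < x) \<and> sum_list xs = n \<and> set xs \<subseteq> S}"

end

theory Submission
  imports Defs
begin

text \<open>A word over \<open>{p, q}\<close> is determined by the lengths of its maximal runs of \<open>q\<close>'s, the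
  runs being separated by the letters \<open>p\<close>; a word with \<open>k\<close> runs of lengths \<open>i\<^sub>1, \<dots>, i\<^sub>k\<close> has
  \<open>k - 1\<close> separators and therefore sum \<open>(p + q i\<^sub>1) + \<dots> + (p + q i\<^sub>k) - p\<close>. So compositions
  of \<open>n - p\<close> into parts \<open>p, q\<close> and compositions of \<open>n\<close> into parts \<open>p + q i\<close> are both in
  bijection with the nonempty lists \<open>i\<^sub>1, \<dots>, i\<^sub>k\<close> satisfying \<open>\<Sum>(p + q i\<^sub>j) = n\<close>.\<close>

fun join_runs :: "nat \<Rightarrow> nat \<Rightarrow> nat list \<Rightarrow> nat list" where
  "join_runs p q [] = []"
| "join_runs p q [i] = replicate i q"
| "join_runs p q (i # j # is) = replicate i q @ p # join_runs p q (j # is)"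

primrec run_lengths :: "nat \<Rightarrow> nat list \<Rightarrow> nat list" where
  "run_lengths q [] = [0]"
| "run_lengths q (x # xs) =
     (if x = q then Suc (hd (run_lengths q xs)) # tl (run_lengths q xs) else 0 # run_lengths q xs)"

lemma run_lengths_not_Nil: "run_lengths q xs \<noteq> []"
  by (cases xs) auto

lemma run_lengths_replicate_append:
  "run_lengths q (replicate i q @ ys) = (hd (run_lengths q ys) + i) # tl (run_lengths q ys)"
  by (induction i) (auto simp: run_lengths_not_Nil)

lemma run_lengths_join_runs:
  assumes "p \<noteq> q" and "is \<noteq> []"
  shows "run_lengths q (join_runs p q is) = is"
  using assms
proof (induction p q "is" rule: join_runs.induct)
  case (2 p q i)
  then show ?case using run_lengths_replicate_append[of q i "[]"] by simp
next
  case (3 p q i j "is")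
  then show ?case using run_lengths_replicate_append[of q i "p # join_runs p q (j # is)"] by simp
qed simp

lemma join_runs_Suc: "join_runs p q (Suc i # is) = q # join_runs p q (i # is)"
  by (cases "is") auto

lemma join_runs_run_lengths:
  assumes "set xs \<subseteq> {p, q}"
  shows "join_runs p q (run_lengths q xs) = xs"
  using assms
proof (induction xs)
  case (Cons x xs)
  obtain i "is" where "run_lengths q xs = i # is"
    using run_lengths_not_Nil by (metis list.exhaust)
  with Cons show ?case by (auto simp: join_runs_Suc)
qed simp

lemma sum_list_join_runs:
  "is \<noteq> [] \<Longrightarrow> sum_list (join_runs p q is) + p = (\<Sum>i\<leftarrow>is. p + q * i)"
  by (induction p q "is" rule: join_runs.induct) (auto simp: sum_list_replicate)

lemma set_join_runs: "set (join_runs p q is) \<subseteq> {p, q}"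
  by (induction p q "is" rule: join_runs.induct) auto

lemma bij_betw_join_runs:
  fixes p q n :: nat
  assumes "0 < p" and "0 < q" and "p \<noteq> q"
  shows "bij_betw (join_runs p q) {is. (\<Sum>i\<leftarrow>is. p + q * i) = n + p}
           (compositions_with_parts {p, q} n)"
proof (rule bij_betw_byWitness[where f' = "run_lengths q"])
  have not_Nil: "is \<noteq> []" if "(\<Sum>i\<leftarrow>is. p + q * i) = n + p" for "is"
    using that assms(1) by auto
  show "\<forall>is\<in>{is. (\<Sum>i\<leftarrow>is. p + q * i) = n + p}. run_lengths q (join_runs p q is) = is"
    using run_lengths_join_runs[OF assms(3)] not_Nil by blast
  show "\<forall>xs\<in>compositions_with_parts {p, q} n. join_runs p q (run_lengths q xs) = xs"
    using join_runs_run_lengths unfolding compositions_with_parts_def by blast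
  show "join_runs p q ` {is. (\<Sum>i\<leftarrow>is. p + q * i) = n + p} \<subseteq> compositions_with_parts {p, q} n"
  proof clarify
    fix "is" assume "(\<Sum>i\<leftarrow>is. p + q * i) = n + p"
    then have "sum_list (join_runs p q is) = n"
      using sum_list_join_runs[OF not_Nil] by (metis add_right_cancel)
    moreover have "set (join_runs p q is) \<subseteq> {p, q}"
      by (rule set_join_runs)
    ultimately show "join_runs p q is \<in> compositions_with_parts {p, q} n"
      using assms(1,2) unfolding compositions_with_parts_def by auto
  qed
  show "run_lengths q ` compositions_with_parts {p, q} n \<subseteq> {is. (\<Sum>i\<leftarrow>is. p + q * i) = n + p}"
  proof clarify
    fix xs assume "xs \<in> compositions_with_parts {p, q} n"
    then have "set xs \<subseteq> {p, q}" and "sum_list xs = n"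
      unfolding compositions_with_parts_def by auto
    then show "(\<Sum>i\<leftarrow>run_lengths q xs. p + q * i) = n + p"
      using sum_list_join_runs[of "run_lengths q xs" p q] run_lengths_not_Nil
        join_runs_run_lengths by simp
  qed
qed

lemma bij_betw_map_compositions_with_parts:
  fixes f :: "'a \<Rightarrow> nat"
  assumes "inj f" and "\<And>x. 0 < f x"
  shows "bij_betw (map f) {xs. sum_list (map f xs) = n} (compositions_with_parts (range f) n)"
proof (rule bij_betw_imageI)
  show "inj_on (map f) {xs. sum_list (map f xs) = n}"
    by (rule inj_on_subset[OF list.inj_map[OF assms(1)]]) simp
  show "map f ` {xs. sum_list (map f xs) = n} = compositions_with_parts (range f) n"
  proof
    show "map f ` {xs. sum_list (map f xs) = n} \<subseteq> compositions_with_parts (range f) n"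
      using assms(2) unfolding compositions_with_parts_def by auto
    show "compositions_with_parts (range f) n \<subseteq> map f ` {xs. sum_list (map f xs) = n}"
    proof
      fix ys assume ys: "ys \<in> compositions_with_parts (range f) n"
      then have "ys = map f (map (inv f) ys)"
        unfolding compositions_with_parts_def by (auto simp: f_inv_into_f intro!: map_idI[symmetric])
      with ys show "ys \<in> map f ` {xs. sum_list (map f xs) = n}"
        unfolding compositions_with_parts_def by (metis (mono_tags) image_eqI mem_Collect_eq)
    qed
  qed
qed

theorem proposition5:
  fixes p q n :: nat
  assumes "0 < p" and "0 < q" and "p \<noteq> q" and "p \<le> n"
  shows "card (compositions_with_parts {p, q} (n - p)) =
         card (compositions_with_parts {p + q * i | i. True} n)"
proof -
  let ?index_lists = "{is. (\<Sum>i\<leftarrow>is. p + q * i) = n}"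
  have "bij_betw (join_runs p q) ?index_lists (compositions_with_parts {p, q} (n - p))"
    using bij_betw_join_runs[OF assms(1-3), of "n - p"] assms(4) by simp
  moreover have "bij_betw (map (\<lambda>i. p + q * i)) ?index_lists
                   (compositions_with_parts {p + q * i | i. True} n)"
    using bij_betw_map_compositions_with_parts[of "\<lambda>i. p + q * i" n] assms(1,2)
    by (simp add: inj_def full_SetCompr_eq)
  ultimately show ?thesis
    by (metis bij_betw_same_card)
qed

end
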